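(* Let $\mathcal A\subset\mathbb R^d$ be finite and nonempty, $\mathcal D=\mathrm{conv}(\mathcal A)$, and let $f$ be convex and differentiable on an open set containing $\mathcal D$ and $\mu$-strongly convex on $\mathcal D$ with respect to the Euclidean norm, $\mu\ge0$ (i.e. $f(y)-f(x)-\langle\nabla f(x),y-x\rangle\ge\frac\mu2\|y-x\|^2$ for all $x,y\in\mathcal D$). Then $\mu_f^{A}\ge\mu\cdot\mathrm{PWidth}(\mathcal A)^2$.
   Context: Euclidean norm and inner product. For a finite $\mathcal B\subseteq\mathbb R^d$ and $x\in\mathrm{conv}(\mathcal B)$, $\mathcal S_x(\mathcal B)$ is the family of subsets $S\subseteq\mathcal B$ such that $x$ is a proper convex combination of all elements of $S$ (all coefficients positive); write $\mathcal S_x=\mathcal S_x(\mathcal A)$. For $r\ne0$, $\mathrm{PdirW}(\mathcal B,r,x):=\min_{S\in\mathcal S_x(\mathcal B)}\max_{s\in\mathcal B,\,v\in S}\langle r/\|r\|,s-v\rangle$, and $\mathrm{PWidth}(\mathcal A):=\inf\{\mathrm{PdirW}(\mathcal K\cap\mathcal A,r,x)\}$ over all nonempty faces $\mathcal K$ of $\mathrm{conv}(\mathcal A)$ (including itself), $x\in\mathcal K$, $r\in\mathrm{cone}(\mathcal K-x)\setminus\{0\}$. For $x\in\mathcal D$: $s_f(x)\in\arg\min_{a\in\mathcal A}\langle\nabla f(x),a\rangle$; for $S\in\mathcal S_x$, $v_S(x)\in\arg\max_{v\in S}\langle\nabla f(x),v\rangle$; $v_f(x)$ is an element of $\{v_S(x):S\in\mathcal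 S_x\}$ minimizing $\langle\nabla f(x),\cdot\rangle$. For $x,x^*\in\mathcal D$ with $\langle\nabla f(x),x^*-x\rangle<0$, $\gamma^{A}(x,x^* ):=\frac{\langle-\nabla f(x),x^*-x\rangle}{\langle-\nabla f(x),s_f(x)-v_f(x)\rangle}$, and $\mu_f^{A}:=\inf_{x\in\mathcal D}\inf_{x^*\in\mathcal D:\langle\nabla f(x),x^*-x\rangle<0}\frac{2}{\gamma^{A}(x,x^* )^2}\big(f(x^* )-f(x)-\langle\nabla f(x),x^*-x\rangle\big)$ (an infimum over the empty set is $+\infty$). *)

theory Defs
  imports "HOL-Analysis.Analysis"
begin

definition proper_supports :: "'a::euclidean_space set \<Rightarrow> 'a \<Rightarrow> 'a set set" where
  "proper_supports B x = {S. S \<subseteq> B \<and> (\<exists>c. (\<forall>v\<in>S. c v > 0) \<and> sum c S = 1 \<and>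
      (\<Sum>v\<in>S. c v *\<^sub>R v) = x)}"

definition PdirW :: "'a::euclidean_space set \<Rightarrow> 'a \<Rightarrow> 'a \<Rightarrow> real" where
  "PdirW B r x = Min ((\<lambda>S. Max {(r /\<^sub>R norm r) \<bullet> (s - v) | s v. s \<in> B \<and> v \<in> S})
                        ` proper_supports B x)"

text \<open>PWidth(A), as an extended real (infimum over the empty set is +infinity).\<close>
definition PWidth :: "'a::euclidean_space set \<Rightarrow> ereal" where
  "PWidth A = Inf {ereal (PdirW (K \<inter> A) r x) | K x r.
      K face_of convex hull A \<and> K \<noteq> {} \<and> x \<in> K \<and>
      r \<in> conic hull ((\<lambda>y. y - x) ` K) \<and> r \<noteq> 0}"

text \<open>The denominator
  <-g x, s_f(x) - v_f(x)> is written through the values of the argmin/argmax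
  (it does not depend on the choice of s_f(x), v_S(x), v_f(x)):
  <g x, s_f x> = min over a in A of <g x, a>, and
  <g x, v_f x> = min over S in S_x of max over v in S of <g x, v>.\<close>
definition gammaA :: "'a::euclidean_space set \<Rightarrow> ('a \<Rightarrow> 'a) \<Rightarrow> 'a \<Rightarrow> 'a \<Rightarrow> real" where
  "gammaA A g x xs =
     ((- g x) \<bullet> (xs - x)) /
     (- (Min ((\<lambda>a. g x \<bullet> a) ` A))
      + Min ((\<lambda>S. Max ((\<lambda>v. g x \<bullet> v) ` S)) ` proper_supports A x))"

text \<open>mu_f^A as an extended real (infimum over the empty set is +infinity).\<close>
definition muA :: "'a::euclidean_space set \<Rightarrow> ('a \<Rightarrow> real) \<Rightarrow> ('a \<Rightarrow> 'a) \<Rightarrow> ereal" where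
  "muA A f g = Inf {ereal (2 / (gammaA A g x xs)\<^sup>2 * (f xs - f x - g x \<bullet> (xs - x))) | x xs.
      x \<in> convex hull A \<and> xs \<in> convex hull A \<and> g x \<bullet> (xs - x) < 0}"

end

theory Submission
  imports Defs
begin

text \<open>Fix \<open>x, x\<^sup>* \<in> \<D>\<close> with \<open>\<langle>\<nabla>f(x), x\<^sup>* - x\<rangle> < 0\<close> and let \<open>r = -\<nabla>f(x)\<close>.
  Project \<open>r\<close> onto the (closed, polyhedral) tangent cone \<open>C\<close> of \<open>\<D>\<close> at \<open>x\<close>; by Moreau's
  decomposition the projection \<open>r'\<close> is orthogonal to the residual \<open>r - r'\<close>, which lies in the
  polar cone of \<open>C\<close>. Hence \<open>\<langle>r, x\<^sup>* - x\<rangle> \<le> \<langle>r', x\<^sup>* - x\<rangle> \<le> \<parallel>r'\<parallel> \<parallel>x\<^sup>* - x\<parallel>\<close>, and the residual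
  exposes a face \<open>K\<close> of \<open>\<D>\<close> containing \<open>x\<close>, the direction \<open>r'\<close>, and every proper support of
  \<open>x\<close>. On \<open>K\<close> the vectors \<open>r\<close> and \<open>r'\<close> agree on differences, so choosing the support that
  defines \<open>v\<^sub>f(x)\<close> gives \<open>PdirW(K \<inter> \<A>, r', x) \<le> \<langle>r, s\<^sub>f(x) - v\<^sub>f(x)\<rangle> / \<parallel>r'\<parallel>\<close>. Together,
  \<open>PWidth(\<A>) \<le> \<parallel>x\<^sup>* - x\<parallel> / \<gamma>\<^sup>A(x, x\<^sup>*)\<close>, and strong convexity turns this into the bound.\<close>

lemma finite_proper_supports: "finite B \<Longrightarrow> finite (proper_supports B x)"
  by (rule finite_subset[of _ "Pow B"]) (auto simp: proper_supports_def)

lemma proper_supportsD: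
  assumes "S \<in> proper_supports B x"
  shows "S \<subseteq> B" "finite S" "S \<noteq> {}"
  using assms sum.infinite by (force simp: proper_supports_def)+

lemma proper_supports_mono:
  "S \<in> proper_supports A x \<Longrightarrow> S \<subseteq> B \<Longrightarrow> S \<in> proper_supports B x"
  by (auto simp: proper_supports_def)

lemma in_convex_hull_proper_support:
  assumes "S \<in> proper_supports A x"
  shows "x \<in> convex hull S"
proof -
  obtain c where "\<forall>v\<in>S. c v > 0" "sum c S = 1" "(\<Sum>v\<in>S. c v *\<^sub>R v) = x"
    using assms by (auto simp: proper_supports_def)
  then show ?thesis
    using proper_supportsD(2)[OF assms]
    by (auto simp: convex_hull_finite intro!: exI[of _ c] less_imp_le)
qed

lemma proper_supports_nonempty:
  assumes "finite B" "x \<in> convex hull B"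
  shows "proper_supports B x \<noteq> {}"
proof -
  obtain u where u: "\<forall>y\<in>B. 0 \<le> u y" "sum u B = 1" "(\<Sum>y\<in>B. u y *\<^sub>R y) = x"
    using assms(2) unfolding convex_hull_finite[OF assms(1)] by blast
  define S where "S = {v\<in>B. u v > 0}"
  have SB: "S \<subseteq> B" and zero: "\<forall>v\<in>B - S. u v = 0"
    using u(1) unfolding S_def by force+
  have "sum u S = sum u B" "(\<Sum>y\<in>S. u y *\<^sub>R y) = (\<Sum>y\<in>B. u y *\<^sub>R y)"
    using zero by (auto intro: sum.mono_neutral_left[OF assms(1) SB])
  then have "sum u S = 1" "(\<Sum>y\<in>S. u y *\<^sub>R y) = x"
    using u(2,3) by simp_all
  then have "S \<in> proper_supports B x"
    using SB unfolding proper_supports_def S_def by (intro CollectI conjI exI[of _ u]) auto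
  then show ?thesis by auto
qed

lemma proper_support_in_hyperplane:
  assumes S: "S \<in> proper_supports A x" and side: "\<And>w. w \<in> S \<Longrightarrow> h \<bullet> (w - x) \<le> 0"
    and "w \<in> S"
  shows "h \<bullet> w = h \<bullet> x"
proof -
  obtain c where c: "\<forall>v\<in>S. c v > 0" "sum c S = 1" "(\<Sum>v\<in>S. c v *\<^sub>R v) = x"
    using S by (auto simp: proper_supports_def)
  have "(\<Sum>v\<in>S. c v * (h \<bullet> (x - v))) = h \<bullet> (\<Sum>v\<in>S. c v *\<^sub>R (x - v))"
    by (simp add: inner_sum_right)
  also have "(\<Sum>v\<in>S. c v *\<^sub>R (x - v)) = (\<Sum>v\<in>S. c v) *\<^sub>R x - (\<Sum>v\<in>S. c v *\<^sub>R v)"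
    by (simp add: scaleR_diff_right sum_subtractf scaleR_sum_left)
  also have "\<dots> = 0"
    using c by simp
  finally have "(\<Sum>v\<in>S. c v * (h \<bullet> (x - v))) = 0"
    by simp
  moreover have "\<forall>v\<in>S. 0 \<le> c v * (h \<bullet> (x - v))"
  proof
    fix v assume "v \<in> S"
    have "h \<bullet> (x - v) = - (h \<bullet> (v - x))"
      by (simp add: inner_diff_right)
    then have "0 \<le> h \<bullet> (x - v)"
      using side[OF \<open>v \<in> S\<close>] by linarith
    moreover have "0 < c v"
      using c(1) \<open>v \<in> S\<close> by blast
    ultimately show "0 \<le> c v * (h \<bullet> (x - v))" by simp
  qed
  ultimately have "\<forall>v\<in>S. c v * (h \<bullet> (x - v)) = 0"
    using sum_nonneg_eq_0_iff[OF proper_supportsD(2)[OF S], of "\<lambda>v. c v * (h \<bullet> (x - v))"]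
    by simp
  then have "h \<bullet> (x - w) = 0"
    using c(1) \<open>w \<in> S\<close> by fastforce
  then show ?thesis
    by (simp add: inner_diff_right)
qed

lemma face_of_convex_hull_eq_hull_Int:
  fixes A :: "'a::euclidean_space set"
  assumes "finite A" "K face_of convex hull A"
  shows "K = convex hull (K \<inter> A)"
proof -
  obtain S where S: "S \<subseteq> A" "K = convex hull S"
    using face_of_convex_hull_subset[OF finite_imp_compact[OF assms(1)] assms(2)] by blast
  have "S \<subseteq> K"
    unfolding S(2) by (rule hull_subset)
  then have "convex hull S \<subseteq> convex hull (K \<inter> A)"
    using S(1) by (intro hull_mono) auto
  then have "K \<subseteq> convex hull (K \<inter> A)"
    using S(2) by simp
  moreover have "convex hull (K \<inter> A) \<subseteq> K"
    using face_of_imp_convex[OF assms(2)] by (intro hull_minimal) auto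
  ultimately show ?thesis
    by (rule antisym)
qed

lemma PdirW_nonneg:
  assumes "finite B" "x \<in> convex hull B"
  shows "0 \<le> PdirW B r x"
proof -
  have "0 \<le> Max {(r /\<^sub>R norm r) \<bullet> (s - v) | s v. s \<in> B \<and> v \<in> S}"
    if S: "S \<in> proper_supports B x" for S
  proof -
    obtain v where "v \<in> S"
      using proper_supportsD(3)[OF S] by blast
    then have "0 \<in> {(r /\<^sub>R norm r) \<bullet> (s - v) | s v. s \<in> B \<and> v \<in> S}"
      using proper_supportsD(1)[OF S] by force
    moreover have "finite {(r /\<^sub>R norm r) \<bullet> (s - v) | s v. s \<in> B \<and> v \<in> S}"
      using assms(1) proper_supportsD(2)[OF S] by (simp add: finite_image_set2)
    ultimately show ?thesis
      by (meson Max_ge)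
  qed
  then show ?thesis
    unfolding PdirW_def
    using proper_supports_nonempty[OF assms] finite_proper_supports[OF assms(1)]
    by (subst Min_ge_iff) auto
qed

lemma PWidth_nonneg:
  fixes A :: "'a::euclidean_space set"
  assumes "finite A"
  shows "0 \<le> PWidth A"
  unfolding PWidth_def
proof (rule Inf_greatest, clarify)
  fix K x r
  assume "K face_of convex hull A" "x \<in> K"
  then have "x \<in> convex hull (K \<inter> A)"
    using face_of_convex_hull_eq_hull_Int[OF assms] by blast
  then show "0 \<le> ereal (PdirW (K \<inter> A) r x)"
    using PdirW_nonneg[of "K \<inter> A"] assms by simp
qed

lemma PdirW_le_support_bound:
  assumes "finite B" "S \<in> proper_supports B x" "r \<noteq> 0"
    and bound: "\<And>s v. s \<in> B \<Longrightarrow> v \<in> S \<Longrightarrow> r \<bullet> (s - v) \<le> d"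
  shows "PdirW B r x \<le> d / norm r"
proof -
  define Q where "Q = {(r /\<^sub>R norm r) \<bullet> (s - v) | s v. s \<in> B \<and> v \<in> S}"
  have "finite Q"
    unfolding Q_def using assms(1) proper_supportsD(2)[OF assms(2)] by (simp add: finite_image_set2)
  moreover have "Q \<noteq> {}"
    unfolding Q_def using proper_supportsD(1,3)[OF assms(2)] by blast
  moreover have "(r /\<^sub>R norm r) \<bullet> (s - v) \<le> d / norm r" if "s \<in> B" "v \<in> S" for s v
  proof -
    have "(r /\<^sub>R norm r) \<bullet> (s - v) = r \<bullet> (s - v) / norm r"
      by (simp add: divide_inverse_commute)
    then show ?thesis
      using bound[OF that] by (simp add: divide_right_mono)
  qed
  ultimately have "Max Q \<le> d / norm r"
    unfolding Q_def by (subst Max_le_iff) auto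
  moreover have "PdirW B r x \<le> Max Q"
    unfolding PdirW_def Q_def
    using finite_proper_supports[OF assms(1)] assms(2) by (intro Min_le) auto
  ultimately show ?thesis
    by linarith
qed

text \<open>The denominator \<open>\<langle>-\<nabla>f(x), s\<^sub>f(x) - v\<^sub>f(x)\<rangle>\<close> of \<open>\<gamma>\<^sup>A\<close>, for the gradient \<open>g = \<nabla>f(x)\<close>.\<close>
definition pairwise_gap :: "'a::euclidean_space set \<Rightarrow> 'a \<Rightarrow> 'a \<Rightarrow> real" where
  "pairwise_gap A g x = - Min ((\<lambda>a. g \<bullet> a) ` A)
     + Min ((\<lambda>S. Max ((\<lambda>v. g \<bullet> v) ` S)) ` proper_supports A x)"

lemma gammaA_eq_pairwise_gap:
  "gammaA A g x y = (- g x \<bullet> (y - x)) / pairwise_gap A (g x) x"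
  by (simp add: gammaA_def pairwise_gap_def)

lemma obtain_optimal_proper_support:
  assumes "finite A" "x \<in> convex hull A"
  obtains S where "S \<in> proper_supports A x"
    and "Max ((\<lambda>v. g \<bullet> v) ` S) = Min ((\<lambda>S. Max ((\<lambda>v. g \<bullet> v) ` S)) ` proper_supports A x)"
proof -
  let ?M = "\<lambda>S. Max ((\<lambda>v. g \<bullet> v) ` S)"
  have "Min (?M ` proper_supports A x) \<in> ?M ` proper_supports A x"
    using finite_proper_supports[OF assms(1)] proper_supports_nonempty[OF assms] by simp
  then show ?thesis
    using that by force
qed

lemma Min_inner_le_convex_hull:
  assumes "finite A" "y \<in> convex hull A"
  shows "Min ((\<lambda>a. g \<bullet> a) ` A) \<le> g \<bullet> y"
proof -
  have "convex hull A \<subseteq> {z. Min ((\<lambda>a. g \<bullet> a) ` A) \<le> g \<bullet> z}"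
    using assms(1) by (intro hull_minimal) (auto simp: convex_halfspace_ge)
  then show ?thesis
    using assms(2) by blast
qed

lemma convex_hull_le_Max_inner:
  assumes "finite S" "y \<in> convex hull S"
  shows "g \<bullet> y \<le> Max ((\<lambda>v. g \<bullet> v) ` S)"
proof -
  have "convex hull S \<subseteq> {z. g \<bullet> z \<le> Max ((\<lambda>v. g \<bullet> v) ` S)}"
    using assms(1) by (intro hull_minimal) (auto simp: convex_halfspace_le)
  then show ?thesis
    using assms(2) by blast
qed

lemma pairwise_gap_ge:
  assumes "finite A" "x \<in> convex hull A" "y \<in> convex hull A"
  shows "- g \<bullet> (y - x) \<le> pairwise_gap A g x"
proof -
  obtain S where S: "S \<in> proper_supports A x"
    and opt: "Max ((\<lambda>v. g \<bullet> v) ` S) = Min ((\<lambda>S. Max ((\<lambda>v. g \<bullet> v) ` S)) ` proper_supports A x)"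
    using obtain_optimal_proper_support[OF assms(1,2)] .
  have "g \<bullet> x \<le> Max ((\<lambda>v. g \<bullet> v) ` S)"
    using convex_hull_le_Max_inner proper_supportsD(2)[OF S] in_convex_hull_proper_support[OF S] .
  then show ?thesis
    using Min_inner_le_convex_hull[OF assms(1,3), of g] opt
    by (simp add: pairwise_gap_def inner_diff_right)
qed

lemma closest_point_cone_residual:
  fixes C :: "'a::euclidean_space set" and r :: 'a
  assumes "convex C" "closed C" "conic C" "C \<noteq> {}"
  defines "p \<equiv> closest_point C r"
  shows "(r - p) \<bullet> p = 0" and "c \<in> C \<Longrightarrow> (r - p) \<bullet> c \<le> 0"
proof -
  have pC: "p \<in> C"
    unfolding p_def using assms(2,4) by (rule closest_point_in_set)
  have var: "(r - p) \<bullet> (c - p) \<le> 0" if "c \<in> C" for c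
    unfolding p_def
    using any_closest_point_dot[OF assms(1,2) closest_point_in_set[OF assms(2,4)] that]
      closest_point_le[OF assms(2)] by blast
  have "0 \<le> (r - p) \<bullet> p"
    using var[OF conic_mul[OF assms(3) pC, of 0]] by (simp add: inner_diff_right)
  moreover have "(r - p) \<bullet> p \<le> 0"
    using var[OF conic_mul[OF assms(3) pC, of 2]] by (simp add: inner_diff_right algebra_simps)
  ultimately show orth: "(r - p) \<bullet> p = 0"
    by linarith
  show "(r - p) \<bullet> c \<le> 0" if "c \<in> C"
    using var[OF that] orth by (simp add: inner_diff_right)
qed

lemma closed_tangent_cone_convex_hull:
  fixes A :: "'a::euclidean_space set"
  assumes "finite A"
  shows "closed (conic hull ((\<lambda>y. y - x) ` (convex hull A)))"
proof -
  have "(\<lambda>y. y - x) ` (convex hull A) = (+) (- x) ` (convex hull A)"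
    by (rule image_cong) auto
  then have "polytope ((\<lambda>y. y - x) ` (convex hull A))"
    using polytope_translation_eq polytope_convex_hull[OF assms] by metis
  then show ?thesis
    using closed_conic_hull_strong by blast
qed

lemma conic_hull_translation_hyperplane:
  assumes "r \<in> conic hull ((\<lambda>y. y - x) ` D)" "r \<noteq> 0" "h \<bullet> r = 0"
  shows "r \<in> conic hull ((\<lambda>y. y - x) ` (D \<inter> {z. h \<bullet> z = h \<bullet> x}))"
proof -
  obtain t y where ty: "r = t *\<^sub>R (y - x)" "0 \<le> t" "y \<in> D"
    using assms(1) unfolding conic_hull_explicit by blast
  then have "t \<noteq> 0"
    using assms(2) by auto
  then have "h \<bullet> (y - x) = 0"
    using assms(3) ty(1) by simp
  then have "y \<in> D \<inter> {z. h \<bullet> z = h \<bullet> x}"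
    using ty(3) by (simp add: inner_diff_right)
  then show ?thesis
    unfolding conic_hull_explicit using ty(1,2) by blast
qed

text \<open>If \<open>r \<noteq> 0\<close> lies in the tangent cone at \<open>x\<close> and the residual \<open>-g - r\<close> is orthogonal to
  \<open>r\<close> and in the polar cone, the residual exposes a face containing \<open>x\<close>, the direction \<open>r\<close>
  and every proper support of \<open>x\<close>, and on that face \<open>r\<close> and \<open>-g\<close> agree on differences.\<close>
lemma PWidth_le_pairwise_gap_div_norm:
  fixes A :: "'a::euclidean_space set"
  assumes finA: "finite A" and x: "x \<in> convex hull A"
    and r: "r \<in> conic hull ((\<lambda>y. y - x) ` (convex hull A))" "r \<noteq> 0"
    and orth: "(- g - r) \<bullet> r = 0"
    and polar: "\<And>y. y \<in> convex hull A \<Longrightarrow> (- g - r) \<bullet> (y - x) \<le> 0"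
  shows "PWidth A \<le> ereal (pairwise_gap A g x / norm r)"
proof -
  define h where "h = - g - r"
  define K where "K = convex hull A \<inter> {z. h \<bullet> z = h \<bullet> x}"
  have "K face_of convex hull A"
    unfolding K_def using polar
    by (intro face_of_Int_supporting_hyperplane_le) (auto simp: h_def inner_diff_right)
  moreover have "x \<in> K"
    unfolding K_def using x by simp
  moreover have "r \<in> conic hull ((\<lambda>y. y - x) ` K)"
    unfolding K_def using conic_hull_translation_hyperplane[OF r] orth by (simp add: h_def)
  ultimately have width: "PWidth A \<le> ereal (PdirW (K \<inter> A) r x)"
    unfolding PWidth_def using r(2) by (intro Inf_lower) blast
  obtain S where S: "S \<in> proper_supports A x"
    and opt: "Max ((\<lambda>v. g \<bullet> v) ` S) = Min ((\<lambda>S. Max ((\<lambda>v. g \<bullet> v) ` S)) ` proper_supports A x)"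
    using obtain_optimal_proper_support[OF finA x] .
  have S_hull: "w \<in> convex hull A" if "w \<in> S" for w
    using proper_supportsD(1)[OF S] that by (auto intro: hull_inc)
  have S_hyperplane: "h \<bullet> w = h \<bullet> x" if "w \<in> S" for w
    using proper_support_in_hyperplane[OF S _ that] polar[OF S_hull] by (simp add: h_def)
  have "S \<subseteq> K"
    unfolding K_def using S_hull S_hyperplane by blast
  then have S_face: "S \<in> proper_supports (K \<inter> A) x"
    using proper_supports_mono[OF S] proper_supportsD(1)[OF S] by simp
  have "r \<bullet> (s - v) \<le> pairwise_gap A g x" if "s \<in> K \<inter> A" "v \<in> S" for s v
  proof -
    have "h \<bullet> (s - v) = 0"
      using that(1) S_hyperplane[OF that(2)] by (simp add: K_def inner_diff_right)
    then have "r \<bullet> (s - v) = g \<bullet> v - g \<bullet> s"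
      by (simp add: h_def inner_diff_left inner_diff_right)
    also have "\<dots> \<le> Max ((\<lambda>v. g \<bullet> v) ` S) - Min ((\<lambda>a. g \<bullet> a) ` A)"
      using that finA proper_supportsD(2)[OF S] by (intro diff_mono Max_ge Min_le) auto
    finally show ?thesis
      using opt by (simp add: pairwise_gap_def)
  qed
  then have "PdirW (K \<inter> A) r x \<le> pairwise_gap A g x / norm r"
    using finA S_face r(2) by (intro PdirW_le_support_bound) auto
  then show ?thesis
    using width by (meson ereal_less_eq(3) order_trans)
qed

lemma PWidth_le_pairwise_gap_ratio:
  fixes A :: "'a::euclidean_space set"
  assumes finA: "finite A" and x: "x \<in> convex hull A" and y: "y \<in> convex hull A"
    and descent: "g \<bullet> (y - x) < 0"
  shows "PWidth A \<le> ereal (pairwise_gap A g x * norm (y - x) / (- g \<bullet> (y - x)))"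
proof -
  define C where "C = conic hull ((\<lambda>z. z - x) ` (convex hull A))"
  define r where "r = closest_point C (- g)"
  have in_C: "z - x \<in> C" if "z \<in> convex hull A" for z
    unfolding C_def using that by (rule hull_inc[OF imageI])
  have "C \<noteq> {}"
    using in_C[OF x] by blast
  then have cone: "convex C" "closed C" "conic C" "C \<noteq> {}"
    using closed_tangent_cone_convex_hull[OF finA, of x] unfolding C_def
    by (auto intro!: convex_conic_hull convex_translation_subtract conic_conic_hull)
  have r_C: "r \<in> C"
    unfolding r_def using cone(2,4) by (rule closest_point_in_set)
  have orth: "(- g - r) \<bullet> r = 0"
    unfolding r_def by (rule closest_point_cone_residual(1)[OF cone])
  have polar: "(- g - r) \<bullet> (z - x) \<le> 0" if "z \<in> convex hull A" for z
    unfolding r_def by (rule closest_point_cone_residual(2)[OF cone in_C[OF that]])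
  have "- g \<bullet> (y - x) \<le> r \<bullet> (y - x)"
    using polar[OF y] by (simp add: inner_diff_left)
  also have "\<dots> \<le> norm r * norm (y - x)"
    by (rule norm_cauchy_schwarz)
  finally have cs: "- g \<bullet> (y - x) \<le> norm r * norm (y - x)" .
  then have "r \<noteq> 0"
    using descent by auto
  then have "PWidth A \<le> ereal (pairwise_gap A g x / norm r)"
    using PWidth_le_pairwise_gap_div_norm[OF finA x _ _ orth polar] r_C by (simp add: C_def)
  also have "pairwise_gap A g x / norm r \<le> pairwise_gap A g x * norm (y - x) / (- g \<bullet> (y - x))"
  proof -
    have "0 < - g \<bullet> (y - x)"
      using descent by simp
    moreover have "0 \<le> pairwise_gap A g x"
      using pairwise_gap_ge[OF finA x y, of g] descent by simp
    moreover from this have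
      "pairwise_gap A g x * (- g \<bullet> (y - x)) \<le> pairwise_gap A g x * (norm r * norm (y - x))"
      using cs by (rule mult_left_mono[rotated])
    ultimately show ?thesis
      using \<open>r \<noteq> 0\<close> by (simp add: field_simps)
  qed
  finally show ?thesis
    by simp
qed

lemma strong_convexity_scaled_bound:
  fixes \<mu> w p d n b :: real
  assumes "0 \<le> \<mu>" "0 \<le> w" "0 < p" "p \<le> d" "w \<le> d * n / p" "\<mu> / 2 * n\<^sup>2 \<le> b"
  shows "\<mu> * w\<^sup>2 \<le> 2 / (p / d)\<^sup>2 * b"
proof -
  have "\<mu> * w\<^sup>2 \<le> \<mu> * (d * n / p)\<^sup>2"
    using assms(1,2,5) by (simp add: mult_left_mono power_mono)
  also have "\<dots> = (\<mu> * n\<^sup>2) * (d\<^sup>2 / p\<^sup>2)"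
    by (simp add: power_divide power_mult_distrib)
  also have "\<dots> \<le> (2 * b) * (d\<^sup>2 / p\<^sup>2)"
    using assms(6) by (intro mult_right_mono) auto
  also have "\<dots> = 2 / (p / d)\<^sup>2 * b"
    using assms(3,4) by (simp add: power_divide field_simps)
  finally show ?thesis .
qed

theorem mainTheorem8:
  fixes A :: "'a::euclidean_space set" and f :: "'a \<Rightarrow> real" and f' :: "'a \<Rightarrow> 'a"
    and U :: "'a set" and \<mu> :: real
  assumes "finite A" and "A \<noteq> {}"
    and "open U" and "convex hull A \<subseteq> U"
    and "convex_on U f"
    and "\<And>x. x \<in> U \<Longrightarrow> (f has_derivative (\<lambda>h. f' x \<bullet> h)) (at x)"
    and "\<mu> \<ge> 0"
    and "\<And>x y. x \<in> convex hull A \<Longrightarrow> y \<in> convex hull A \<Longrightarrow>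
           f y - f x - f' x \<bullet> (y - x) \<ge> \<mu> / 2 * (norm (y - x))\<^sup>2"
  shows "muA A f f' \<ge> ereal \<mu> * (PWidth A)\<^sup>2"
  \<comment> \<open>Only the strong-convexity inequality on \<open>convex hull A\<close> is needed.\<close>
  unfolding muA_def
proof (rule Inf_greatest, clarify)
  fix x y
  assume x: "x \<in> convex hull A" and y: "y \<in> convex hull A" and descent: "f' x \<bullet> (y - x) < 0"
  have bound: "PWidth A \<le> ereal (pairwise_gap A (f' x) x * norm (y - x) / (- f' x \<bullet> (y - x)))"
    using PWidth_le_pairwise_gap_ratio[OF assms(1) x y descent] .
  obtain w where w: "PWidth A = ereal w" "0 \<le> w"
    using PWidth_nonneg[OF assms(1)] bound by (cases "PWidth A") auto
  have "\<mu> * w\<^sup>2 \<le> 2 / (gammaA A f' x y)\<^sup>2 * (f y - f x - f' x \<bullet> (y - x))"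
    unfolding gammaA_eq_pairwise_gap
    using assms(7) w(2) descent pairwise_gap_ge[OF assms(1) x y] bound assms(8)[OF x y]
    by (intro strong_convexity_scaled_bound) (auto simp: w(1))
  then show "ereal \<mu> * (PWidth A)\<^sup>2 \<le> ereal (2 / (gammaA A f' x y)\<^sup>2 * (f y - f x - f' x \<bullet> (y - x)))"
    by (simp add: w(1) power2_eq_square)
qed

end
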